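(* Let $B=\mathrm{GF}(p^m)$ and $F=\mathrm{GF}(p^{mt})$ and assume $t$ is divisible by $p$. Let $\alpha^*\neq\overline{\alpha}$ be elements of $F$, and let $K_{\alpha^*,\overline{\alpha}}=\{z\in F:\mathrm{Tr}_{F/B}(z(\overline{\alpha}-\alpha^* ))=0\}$. Let $\{u_1,\dots,u_{t-1}\}$ and $\{v_1,\dots,v_{t-1}\}$ be two bases of $K_{\alpha^*,\overline{\alpha}}$ over $B$, completed to bases $\{u_1,\dots,u_t\}$ and $\{v_1,\dots,v_t\}$ of $F$ over $B$. For $i\in[t]$ set $p_i(x)=\dfrac{\mathrm{Tr}_{F/B}(u_i(x-\alpha^* ))}{x-\alpha^*}$ and $q_i(x)=\dfrac{\mathrm{Tr}_{F/B}(v_i(x-\overline{\alpha}))}{x-\overline{\alpha}}$. Let $f\in F[x]$. Then $\mathrm{Tr}_{F/B}\big(p_t(\overline{\alpha})f(\overline{\alpha})\big)$ is a $B$-linear combination of the traces $\mathrm{Tr}_{F/B}\big(q_i(\overline{\alpha})f(\overline{\alpha})\big)$, $i\in[t-1]$, and $\mathrm{Tr}_{F/B}\big(q_t(\alpha^* )f(\alpha^* )\big)$ is a $B$-linear combination of the traces $\mathrm{Tr}_{F/B}\big(p_i(\alpha^* )f(\alpha^* )\big)$, $i\in[t-1]$.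
   Context: $\mathrm{Tr}_{F/B}(x)=\sum_{i=0}^{t-1}x^{|B|^i}$ is the field trace; $[t]=\{1,\dots,t\}$. *)

theory Defs
  imports "HOL-Computational_Algebra.Polynomial"
begin

text \<open>The subfield B = GF(q), q = p^m, of a finite field F: the roots of x^q - x.\<close>
definition subfieldB :: "nat \<Rightarrow> 'a::field set" where
  "subfieldB q = {x. x ^ q = x}"

definition trace :: "nat \<Rightarrow> nat \<Rightarrow> 'a::field \<Rightarrow> 'a" where
  "trace q t x = (\<Sum>i<t. x ^ (q ^ i))"

text \<open>The polynomial Tr_{F/B}(u (x - a)) in the variable x.\<close>
definition trace_poly :: "nat \<Rightarrow> nat \<Rightarrow> 'a::field \<Rightarrow> 'a \<Rightarrow> 'a poly" where
  "trace_poly q t u a = (\<Sum>i<t. smult (u ^ (q ^ i)) ([:- a, 1:] ^ (q ^ i)))"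

text \<open>The polynomial Tr_{F/B}(u (x - a)) / (x - a) (exact division).\<close>
definition repair_poly :: "nat \<Rightarrow> nat \<Rightarrow> 'a::field \<Rightarrow> 'a \<Rightarrow> 'a poly" where
  "repair_poly q t u a = trace_poly q t u a div [:- a, 1:]"

definition lin_indep_over :: "'a::field set \<Rightarrow> (nat \<Rightarrow> 'a) \<Rightarrow> nat set \<Rightarrow> bool" where
  "lin_indep_over B v I =
     (\<forall>c. (\<forall>i\<in>I. c i \<in> B) \<and> (\<Sum>i\<in>I. c i * v i) = 0 \<longrightarrow> (\<forall>i\<in>I. c i = 0))"

definition span_over :: "'a::field set \<Rightarrow> (nat \<Rightarrow> 'a) \<Rightarrow> nat set \<Rightarrow> 'a set" where
  "span_over B v I = {\<Sum>i\<in>I. c i * v i | c. \<forall>i\<in>I. c i \<in> B}"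

definition basis_over :: "'a::field set \<Rightarrow> (nat \<Rightarrow> 'a) \<Rightarrow> nat set \<Rightarrow> 'a set \<Rightarrow> bool" where
  "basis_over B v I S = (lin_indep_over B v I \<and> span_over B v I = S)"

end

theory Submission
  imports Defs "HOL-Number_Theory.Residues"
begin

text \<open>
  Let \<open>d = a_bar - a_star\<close>. Evaluating \<open>p\<^sub>t\<close> at \<open>a_bar\<close> gives \<open>Tr(u\<^sub>t d) / d\<close>, a
  \<open>B\<close>-multiple of \<open>d\<^sup>-\<^sup>1\<close>, while \<open>q\<^sub>i(a_bar) = v\<^sub>i\<close>. Because \<open>p\<close> divides \<open>t\<close>,
  \<open>Tr(d\<^sup>-\<^sup>1 d) = Tr(1) = t = 0\<close>, so \<open>d\<^sup>-\<^sup>1\<close> lies in \<open>K\<close> and is a \<open>B\<close>-combination of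
  \<open>v\<^sub>1, \<dots>, v\<^sub>t\<^sub>-\<^sub>1\<close>; \<open>B\<close>-linearity of the trace then gives the first claim. The second is the
  same argument with \<open>a_star\<close> and \<open>a_bar\<close> exchanged, which leaves \<open>K\<close> unchanged.
\<close>

lemma power_card_eq_self:
  fixes x :: "'a::{field,finite}"
  shows "x ^ card (UNIV :: 'a set) = x"
proof (cases "x = 0")
  case True
  then show ?thesis by (simp add: finite_UNIV_card_ge_0)
next
  case False
  let ?U = "UNIV - {0::'a}"
  have "bij_betw ((*) x) ?U ?U"
    using False by (intro bij_betw_byWitness[where f' = "\<lambda>y. y / x"]) auto
  then have "(\<Prod>y\<in>?U. x * y) = \<Prod>?U"
    using prod.reindex_bij_betw[of "(*) x" ?U ?U "\<lambda>y. y"] by simp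
  then have "x ^ card ?U * \<Prod>?U = 1 * \<Prod>?U"
    by (simp add: prod.distrib)
  then have "x ^ card ?U = 1"
    by (subst (asm) mult_right_cancel) auto
  moreover have "card (UNIV :: 'a set) = Suc (card ?U)"
    using card_Suc_Diff1[of UNIV "0::'a"] by simp
  ultimately show ?thesis
    by (metis power_Suc2 mult_1_left)
qed

lemma CHAR_eq_prime_if_card_eq_power:
  assumes "prime p" "card (UNIV :: 'a::{field,finite} set) = p ^ k"
  shows "CHAR('a) = p"
proof -
  have "prime CHAR('a)"
    by (rule prime_CHAR_semidom[OF finite_imp_CHAR_pos]) simp
  moreover have "CHAR('a) dvd p ^ k"
    using CHAR_dvd_CARD[where 'a = 'a] assms(2) by simp
  ultimately show ?thesis
    using assms(1) prime_dvd_power primes_dvd_imp_eq by blast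
qed

lemma trace_sum:
  fixes g :: "'b \<Rightarrow> 'a::field"
  assumes "prime CHAR('a)" "q = CHAR('a) ^ m"
  shows "trace q t (\<Sum>j\<in>A. g j) = (\<Sum>j\<in>A. trace q t (g j))"
proof -
  have "(\<Sum>j\<in>A. g j) ^ (q ^ i) = (\<Sum>j\<in>A. g j ^ (q ^ i))" for i
    by (rule freshmans_dream_sum'[OF assms(1), where n = "m * i"]) (simp add: assms(2) power_mult)
  then show ?thesis
    unfolding trace_def by (simp add: sum.swap[of _ A])
qed

lemma trace_minus:
  fixes x :: "'a::field"
  assumes "prime CHAR('a)" "q = CHAR('a) ^ m"
  shows "trace q t (- x) = - trace q t x"
proof -
  have "trace q t (x + - x) = trace q t x + trace q t (- x)"
    using trace_sum[OF assms, of t "\<lambda>b. if b then x else - x" UNIV] by (simp add: UNIV_bool)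
  moreover have "q > 0"
    using assms prime_gt_0_nat by simp
  ultimately show ?thesis
    by (simp add: trace_def power_0_left eq_neg_iff_add_eq_0 add.commute)
qed

lemma power_power_eq_self_if_subfieldB:
  fixes c :: "'a::field"
  assumes "c \<in> subfieldB q"
  shows "c ^ (q ^ i) = c"
proof (induction i)
  case (Suc i)
  have "c ^ (q ^ Suc i) = (c ^ q) ^ (q ^ i)"
    by (simp add: power_mult[symmetric] mult.commute)
  with assms Suc show ?case
    by (simp add: subfieldB_def)
qed simp

lemma trace_linear_combination:
  fixes w :: "'b \<Rightarrow> 'a::field"
  assumes "prime CHAR('a)" "q = CHAR('a) ^ m" "\<forall>j\<in>A. c j \<in> subfieldB q"
  shows "trace q t (\<Sum>j\<in>A. c j * w j) = (\<Sum>j\<in>A. c j * trace q t (w j))"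
  unfolding trace_sum[OF assms(1,2)]
proof (rule sum.cong[OF refl])
  fix j assume "j \<in> A"
  then have "c j ^ (q ^ i) = c j" for i
    using assms(3) power_power_eq_self_if_subfieldB by blast
  then show "trace q t (c j * w j) = c j * trace q t (w j)"
    unfolding trace_def by (simp add: power_mult_distrib sum_distrib_left)
qed

text \<open>The Frobenius map \<open>x \<mapsto> x\<^sup>q\<close> only rotates the conjugates \<open>x\<^bsup>q\<^sup>i\<^esup>\<close>, because \<open>x\<^bsup>q\<^sup>t\<^esup> = x\<close>.\<close>

lemma trace_mem_subfieldB:
  fixes x :: "'a::{field,finite}"
  assumes "prime CHAR('a)" "q = CHAR('a) ^ m" "card (UNIV :: 'a set) = q ^ t"
  shows "trace q t x \<in> subfieldB q"
proof -
  define g where "g i = x ^ (q ^ i)" for i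
  have "g t = g 0"
    using power_card_eq_self[of x] assms(3) by (simp add: g_def)
  have "trace q t x ^ q = (\<Sum>i<t. g i ^ q)"
    unfolding trace_def g_def by (rule freshmans_dream_sum'[OF assms(1,2)])
  also have "\<dots> = (\<Sum>i<t. g (Suc i))"
    by (simp add: g_def power_mult[symmetric] mult.commute)
  also have "\<dots> = (\<Sum>i<t. g i)"
    using sum.lessThan_Suc_shift[of g t] sum.lessThan_Suc[of g t] \<open>g t = g 0\<close> by simp
  finally show ?thesis
    unfolding subfieldB_def trace_def g_def by simp
qed

lemma trace_one_eq_zero:
  assumes "CHAR('a::field) dvd t"
  shows "trace q t (1::'a) = 0"
  using assms by (simp add: trace_def of_nat_eq_0_iff_char_dvd)

lemma trace_kernel_swap:
  fixes a b :: "'a::field"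
  assumes "prime CHAR('a)" "q = CHAR('a) ^ m"
  shows "{z. trace q t (z * (a - b)) = 0} = {z. trace q t (z * (b - a)) = 0}"
proof -
  have "trace q t (z * (a - b)) = - trace q t (z * (b - a))" for z
    using trace_minus[OF assms, of t "z * (b - a)"] by (simp add: algebra_simps)
  then show ?thesis by auto
qed

lemma repair_poly_eq_sum:
  fixes u a :: "'a::field"
  assumes "q > 0"
  shows "repair_poly q t u a = (\<Sum>i<t. Polynomial.smult (u ^ (q ^ i)) ([:- a, 1:] ^ (q ^ i - 1)))"
proof -
  have "[:- a, 1:] ^ (q ^ i) = [:- a, 1:] * [:- a, 1:] ^ (q ^ i - 1)" for i
    using assms by (metis Suc_diff_1 power_Suc zero_less_power)
  then have factor: "trace_poly q t u a
      = [:- a, 1:] * (\<Sum>i<t. Polynomial.smult (u ^ (q ^ i)) ([:- a, 1:] ^ (q ^ i - 1)))"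
    unfolding trace_poly_def sum_distrib_left by simp
  show ?thesis
    unfolding repair_poly_def factor by (rule nonzero_mult_div_cancel_left) simp
qed

lemma poly_repair_poly_times_diff:
  fixes u a b :: "'a::field"
  assumes "q > 0"
  shows "poly (repair_poly q t u a) b * (b - a) = trace q t (u * (b - a))"
proof -
  have "(b - a) ^ (q ^ i - 1) * (b - a) = (b - a) ^ (q ^ i)" for i
    using assms by (metis Suc_diff_1 power_Suc2 zero_less_power)
  then show ?thesis
    unfolding repair_poly_eq_sum[OF assms] trace_def
    by (simp add: poly_sum sum_distrib_right power_mult_distrib mult.assoc)
qed

lemma poly_repair_poly_self:
  fixes u a :: "'a::field"
  assumes "q > 1" "t > 0"
  shows "poly (repair_poly q t u a) a = u"
proof -
  have "poly (repair_poly q t u a) a = (\<Sum>i<t. u ^ (q ^ i) * 0 ^ (q ^ i - 1))"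
    using assms(1) by (simp add: repair_poly_eq_sum poly_sum)
  also have "\<dots> = (\<Sum>i\<in>{0}. u ^ (q ^ i) * 0 ^ (q ^ i - 1))"
  proof (rule sum.mono_neutral_right)
    show "\<forall>i\<in>{..<t} - {0}. u ^ q ^ i * 0 ^ (q ^ i - 1) = 0"
    proof
      fix i assume "i \<in> {..<t} - {0}"
      then have "q ^ i > 1"
        using assms(1) one_less_power by blast
      then show "u ^ q ^ i * 0 ^ (q ^ i - 1) = 0"
        by simp
    qed
  qed (use assms in auto)
  finally show ?thesis by simp
qed

lemma trace_repair_poly_linear_combination:
  fixes a b x y :: "'a::{field,finite}" and w :: "nat \<Rightarrow> 'a"
  assumes "prime CHAR('a)" "q = CHAR('a) ^ m" "m > 0" "t > 0" "card (UNIV :: 'a set) = q ^ t"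
    and "CHAR('a) dvd t" "a \<noteq> b"
    and "span_over (subfieldB q) w I = {z. trace q t (z * (b - a)) = 0}"
  shows "\<exists>c. (\<forall>i\<in>I. c i \<in> subfieldB q) \<and>
           trace q t (poly (repair_poly q t x a) b * y)
           = (\<Sum>i\<in>I. c i * trace q t (poly (repair_poly q t (w i) b) b * y))"
proof -
  have "q > 1"
    using assms(1-3) prime_gt_1_nat one_less_power by blast
  have "inverse (b - a) \<in> span_over (subfieldB q) w I"
    using assms(6-8) trace_one_eq_zero by simp
  then obtain c where c: "\<forall>i\<in>I. c i \<in> subfieldB q" "inverse (b - a) = (\<Sum>i\<in>I. c i * w i)"
    unfolding span_over_def by auto
  define l where "l = trace q t (x * (b - a))"
  have "l \<in> subfieldB q"
    unfolding l_def using trace_mem_subfieldB[OF assms(1,2,5)] .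
  then have lc: "\<forall>i\<in>I. l * c i \<in> subfieldB q"
    using c(1) by (simp add: subfieldB_def power_mult_distrib)
  have "poly (repair_poly q t x a) b = l * inverse (b - a)"
    using poly_repair_poly_times_diff[of q t x a b] \<open>q > 1\<close> assms(7)
    by (simp add: l_def field_simps)
  then have "trace q t (poly (repair_poly q t x a) b * y) = trace q t (\<Sum>i\<in>I. (l * c i) * (w i * y))"
    by (simp add: c(2) sum_distrib_left sum_distrib_right mult_ac)
  also have "\<dots> = (\<Sum>i\<in>I. (l * c i) * trace q t (poly (repair_poly q t (w i) b) b * y))"
    by (simp add: trace_linear_combination[OF assms(1,2) lc] poly_repair_poly_self[OF \<open>q > 1\<close> assms(4)])
  finally show ?thesis
    using lc by (intro exI[of _ "\<lambda>i. l * c i"]) simp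
qed

theorem corollary2:
  fixes p m t :: nat
    and a_star a_bar :: "'a::{field,finite}"
    and u v :: "nat \<Rightarrow> 'a"
    and f :: "'a poly"
  assumes "prime p" and "m > 0" and "t > 0"
    and "card (UNIV :: 'a set) = p ^ (m * t)"
    and "p dvd t"
    and "a_star \<noteq> a_bar"
    and "basis_over (subfieldB (p ^ m)) u {1..t-1}
           {z. trace (p ^ m) t (z * (a_bar - a_star)) = 0}"
    and "basis_over (subfieldB (p ^ m)) v {1..t-1}
           {z. trace (p ^ m) t (z * (a_bar - a_star)) = 0}"
    and "basis_over (subfieldB (p ^ m)) u {1..t} UNIV"
    and "basis_over (subfieldB (p ^ m)) v {1..t} UNIV"
  shows "(\<exists>c. (\<forall>i\<in>{1..t-1}. c i \<in> subfieldB (p ^ m)) \<and>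
            trace (p ^ m) t (poly (repair_poly (p ^ m) t (u t) a_star) a_bar * poly f a_bar)
            = (\<Sum>i\<in>{1..t-1}. c i *
                 trace (p ^ m) t (poly (repair_poly (p ^ m) t (v i) a_bar) a_bar * poly f a_bar)))
       \<and> (\<exists>c. (\<forall>i\<in>{1..t-1}. c i \<in> subfieldB (p ^ m)) \<and>
            trace (p ^ m) t (poly (repair_poly (p ^ m) t (v t) a_bar) a_star * poly f a_star)
            = (\<Sum>i\<in>{1..t-1}. c i *
                 trace (p ^ m) t (poly (repair_poly (p ^ m) t (u i) a_star) a_star * poly f a_star)))"
proof -
  have char: "CHAR('a) = p"
    using CHAR_eq_prime_if_card_eq_power[OF assms(1,4)] .
  have q: "p ^ m = CHAR('a) ^ m"
    using char by simp
  note field = assms(1)[folded char] q assms(2,3)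
    assms(4)[unfolded power_mult] assms(5)[folded char]
  have "span_over (subfieldB (p ^ m)) v {1..t-1} = {z. trace (p ^ m) t (z * (a_bar - a_star)) = 0}"
    using assms(8) by (simp add: basis_over_def)
  moreover have "span_over (subfieldB (p ^ m)) u {1..t-1} = {z. trace (p ^ m) t (z * (a_star - a_bar)) = 0}"
    using assms(7) trace_kernel_swap[OF field(1,2)] by (simp add: basis_over_def)
  ultimately show ?thesis
    by (intro conjI trace_repair_poly_linear_combination[OF field] assms(6) assms(6)[symmetric])
qed

end
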